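(* Let $S$ be a compact semigroupoid with open multiplication, and let $T$ be a subsemigroupoid of $S$ that is factorial and dense in $S$. Then $S$ is equidivisible if and only if $T$ is equidivisible.
   Context: A semigroupoid is a graph (vertices, edges, source/range maps $\alpha,\omega$) with associative partial multiplication defined exactly on $D(S)=\{(s,t):\alpha(s)=\omega(t)\}$; $S^I$ adjoins a local identity at each vertex. A compact semigroupoid carries a compact Hausdorff topology in which vertices and edges form closed sets and $\alpha,\omega$ and multiplication are continuous; multiplication is open if $D(S)\to E(S)$ maps open sets to open sets. $T$ is factorial in $S$ if $st\in T$ implies $s,t\in T$. $S$ is equidivisible if whenever $uv=xy$ there is $t\in E(S^I)$ with ($ut=x$ and $v=ty$) or ($xt=u$ and $y=tv$) (for $T$, with $t\in E(T^I)$). *)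

theory Defs
  imports "HOL-Analysis.Analysis"
begin

text \<open>A semigroupoid is represented on a single carrier type 'a: a vertex set V, an edge set E
  (disjoint), source map al (alpha), range map om (omega), and a multiplication m, which is only
  meaningful on D(S) = {(s,t). al s = om t}.\<close>

definition Dom :: "'a set \<Rightarrow> ('a \<Rightarrow> 'a) \<Rightarrow> ('a \<Rightarrow> 'a) \<Rightarrow> ('a \<times> 'a) set" where
  "Dom E al om = {(s,t). s \<in> E \<and> t \<in> E \<and> al s = om t}"

definition semigroupoid ::
  "'a set \<Rightarrow> 'a set \<Rightarrow> ('a \<Rightarrow> 'a) \<Rightarrow> ('a \<Rightarrow> 'a) \<Rightarrow> ('a \<Rightarrow> 'a \<Rightarrow> 'a) \<Rightarrow> bool" where
  "semigroupoid V E al om m \<longleftrightarrow>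
     V \<inter> E = {} \<and>
     (\<forall>e\<in>E. al e \<in> V \<and> om e \<in> V) \<and>
     (\<forall>s\<in>E. \<forall>t\<in>E. al s = om t \<longrightarrow>
         m s t \<in> E \<and> al (m s t) = al t \<and> om (m s t) = om s) \<and>
     (\<forall>r\<in>E. \<forall>s\<in>E. \<forall>t\<in>E. al r = om s \<longrightarrow> al s = om t \<longrightarrow>
         m (m r s) t = m r (m s t))"

definition compact_semigroupoid ::
  "'a topology \<Rightarrow> 'a set \<Rightarrow> 'a set \<Rightarrow> ('a \<Rightarrow> 'a) \<Rightarrow> ('a \<Rightarrow> 'a) \<Rightarrow> ('a \<Rightarrow> 'a \<Rightarrow> 'a) \<Rightarrow> bool" where
  "compact_semigroupoid X V E al om m \<longleftrightarrow>
     semigroupoid V E al om m \<and>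
     topspace X = V \<union> E \<and> compact_space X \<and> Hausdorff_space X \<and>
     closedin X V \<and> closedin X E \<and>
     continuous_map (subtopology X E) (subtopology X V) al \<and>
     continuous_map (subtopology X E) (subtopology X V) om \<and>
     continuous_map (subtopology (prod_topology X X) (Dom E al om)) (subtopology X E)
       (\<lambda>(s,t). m s t)"

definition open_multiplication ::
  "'a topology \<Rightarrow> 'a set \<Rightarrow> ('a \<Rightarrow> 'a) \<Rightarrow> ('a \<Rightarrow> 'a) \<Rightarrow> ('a \<Rightarrow> 'a \<Rightarrow> 'a) \<Rightarrow> bool" where
  "open_multiplication X E al om m \<longleftrightarrow>
     open_map (subtopology (prod_topology X X) (Dom E al om)) (subtopology X E) (\<lambda>(s,t). m s t)"

definition subsemigroupoid ::
  "'a set \<Rightarrow> 'a set \<Rightarrow> 'a set \<Rightarrow> 'a set \<Rightarrow> ('a \<Rightarrow> 'a) \<Rightarrow> ('a \<Rightarrow> 'a) \<Rightarrow> ('a \<Rightarrow> 'a \<Rightarrow> 'a) \<Rightarrow> bool" where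
  "subsemigroupoid VT ET V E al om m \<longleftrightarrow>
     VT \<subseteq> V \<and> ET \<subseteq> E \<and>
     (\<forall>e\<in>ET. al e \<in> VT \<and> om e \<in> VT) \<and>
     (\<forall>s\<in>ET. \<forall>t\<in>ET. al s = om t \<longrightarrow> m s t \<in> ET)"

definition factorial :: "'a set \<Rightarrow> 'a set \<Rightarrow> ('a \<Rightarrow> 'a) \<Rightarrow> ('a \<Rightarrow> 'a) \<Rightarrow> ('a \<Rightarrow> 'a \<Rightarrow> 'a) \<Rightarrow> bool" where
  "factorial ET E al om m \<longleftrightarrow>
     (\<forall>s\<in>E. \<forall>t\<in>E. al s = om t \<longrightarrow> m s t \<in> ET \<longrightarrow> s \<in> ET \<and> t \<in> ET)"

text \<open>The unitization S^I: its edges are Inl e (e an edge) and Inr p (the local identity at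
  vertex p).\<close>
definition edgesI :: "'a set \<Rightarrow> 'a set \<Rightarrow> ('a + 'a) set" where
  "edgesI V E = Inl ` E \<union> Inr ` V"

fun alI :: "('a \<Rightarrow> 'a) \<Rightarrow> 'a + 'a \<Rightarrow> 'a" where
  "alI al (Inl e) = al e"
| "alI al (Inr p) = p"

fun omI :: "('a \<Rightarrow> 'a) \<Rightarrow> 'a + 'a \<Rightarrow> 'a" where
  "omI om (Inl e) = om e"
| "omI om (Inr p) = p"

fun mI :: "('a \<Rightarrow> 'a \<Rightarrow> 'a) \<Rightarrow> 'a + 'a \<Rightarrow> 'a + 'a \<Rightarrow> 'a + 'a" where
  "mI m (Inl a) (Inl b) = Inl (m a b)"
| "mI m (Inl a) (Inr p) = Inl a"
| "mI m (Inr p) b = b"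

definition equidivisible ::
  "'a set \<Rightarrow> 'a set \<Rightarrow> ('a \<Rightarrow> 'a) \<Rightarrow> ('a \<Rightarrow> 'a) \<Rightarrow> ('a \<Rightarrow> 'a \<Rightarrow> 'a) \<Rightarrow> bool" where
  "equidivisible V E al om m \<longleftrightarrow>
     (\<forall>u\<in>E. \<forall>v\<in>E. \<forall>x\<in>E. \<forall>y\<in>E.
        al u = om v \<longrightarrow> al x = om y \<longrightarrow> m u v = m x y \<longrightarrow>
        (\<exists>t\<in>edgesI V E.
           (al u = omI om t \<and> mI m (Inl u) t = Inl x \<and>
            alI al t = om y \<and> Inl v = mI m t (Inl y)) \<or>
           (al x = omI om t \<and> mI m (Inl x) t = Inl u \<and>
            alI al t = om v \<and> Inl y = mI m t (Inl v))))"

end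

theory Submission
  imports Defs
begin

(* Equidivisibility says that two factorizations u v = x y either coincide or arise from each
   other by shifting an edge e across the middle (x = u e and v = e y, or symmetrically). In a
   compact semigroupoid the pairs of factorizations related in this way form a closed set, the
   shifts being the projection along the compact factor E of a closed subset of E x E^4. Open
   multiplication, density and factoriality of T make every pair of equal factorizations in S a
   limit of such pairs in T, which gives the passage from T to S. Conversely, an edge e with
   u e = x in T lies in T by factoriality. *)

definition mult_graph ::
  "'a set \<Rightarrow> ('a \<Rightarrow> 'a) \<Rightarrow> ('a \<Rightarrow> 'a) \<Rightarrow> ('a \<Rightarrow> 'a \<Rightarrow> 'a) \<Rightarrow> (('a \<times> 'a) \<times> 'a) set" where
  "mult_graph E al om m = (\<lambda>p. (p, case_prod m p)) ` Dom E al om"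

lemma mem_mult_graph [simp]:
  "((s,t),w) \<in> mult_graph E al om m \<longleftrightarrow> (s,t) \<in> Dom E al om \<and> w = m s t"
  by (auto simp: mult_graph_def)

definition edge_shift ::
  "'a set \<Rightarrow> ('a \<Rightarrow> 'a) \<Rightarrow> ('a \<Rightarrow> 'a) \<Rightarrow> ('a \<Rightarrow> 'a \<Rightarrow> 'a) \<Rightarrow> 'a \<Rightarrow> 'a \<Rightarrow> 'a \<Rightarrow> 'a \<Rightarrow> bool" where
  "edge_shift E al om m u v x y \<longleftrightarrow>
     (\<exists>e. (u,e) \<in> Dom E al om \<and> m u e = x \<and> (e,y) \<in> Dom E al om \<and> m e y = v)"

definition equal_products ::
  "'a set \<Rightarrow> ('a \<Rightarrow> 'a) \<Rightarrow> ('a \<Rightarrow> 'a) \<Rightarrow> ('a \<Rightarrow> 'a \<Rightarrow> 'a) \<Rightarrow> (('a \<times> 'a) \<times> ('a \<times> 'a)) set" where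
  "equal_products E al om m =
     {(p,q). p \<in> Dom E al om \<and> q \<in> Dom E al om \<and> case_prod m p = case_prod m q}"

definition shift_related ::
  "'a set \<Rightarrow> ('a \<Rightarrow> 'a) \<Rightarrow> ('a \<Rightarrow> 'a) \<Rightarrow> ('a \<Rightarrow> 'a \<Rightarrow> 'a) \<Rightarrow> (('a \<times> 'a) \<times> ('a \<times> 'a)) set" where
  "shift_related E al om m =
     {((u,v),(x,y)). edge_shift E al om m u v x y \<or> edge_shift E al om m x y u v \<or> (u,v) = (x,y)}"

lemma mem_equal_products [simp]:
  "((u,v),(x,y)) \<in> equal_products E al om m \<longleftrightarrow>
     u \<in> E \<and> v \<in> E \<and> x \<in> E \<and> y \<in> E \<and> al u = om v \<and> al x = om y \<and> m u v = m x y"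
  by (auto simp: equal_products_def Dom_def)

lemma mem_shift_related [simp]:
  "((u,v),(x,y)) \<in> shift_related E al om m \<longleftrightarrow>
     edge_shift E al om m u v x y \<or> edge_shift E al om m x y u v \<or> (u,v) = (x,y)"
  by (simp add: shift_related_def)

lemma Dom_mono: "E' \<subseteq> E \<Longrightarrow> Dom E' al om \<subseteq> Dom E al om"
  by (auto simp: Dom_def)

lemma Dom_factorial:
  assumes "factorial E' E al om m" and "p \<in> Dom E al om" and "case_prod m p \<in> E'"
  shows "p \<in> Dom E' al om"
  using assms by (auto simp: factorial_def Dom_def)

lemma shift_related_mono: "E' \<subseteq> E \<Longrightarrow> shift_related E' al om m \<subseteq> shift_related E al om m"
  unfolding shift_related_def edge_shift_def using Dom_mono by blast

lemma edge_shift_factorial: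
  assumes "factorial E' E al om m" and "edge_shift E al om m u v x y"
    and "x \<in> E'" and "y \<in> E'"
  shows "edge_shift E' al om m u v x y"
proof -
  obtain e where ue: "(u,e) \<in> Dom E al om" "m u e = x" and ey: "(e,y) \<in> Dom E al om" "m e y = v"
    using assms(2) by (auto simp: edge_shift_def)
  have "(u,e) \<in> Dom E' al om"
    using Dom_factorial[OF assms(1) ue(1)] ue(2) assms(3) by simp
  moreover from this ey(1) assms(4) have "(e,y) \<in> Dom E' al om"
    by (auto simp: Dom_def)
  ultimately show ?thesis
    using ue(2) ey(2) by (auto simp: edge_shift_def)
qed

lemma shift_related_factorial:
  assumes "factorial E' E al om m"
  shows "equal_products E' al om m \<inter> shift_related E al om m \<subseteq> shift_related E' al om m"
  using edge_shift_factorial[OF assms]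
  by (fastforce simp: equal_products_def shift_related_def Dom_def)

lemma unitization_witness_iff:
  assumes uvxy: "((u,v),(x,y)) \<in> equal_products E al om m" and "\<forall>e\<in>E. al e \<in> V"
  shows "(\<exists>t\<in>edgesI V E.
           (al u = omI om t \<and> mI m (Inl u) t = Inl x \<and> alI al t = om y \<and> Inl v = mI m t (Inl y)) \<or>
           (al x = omI om t \<and> mI m (Inl x) t = Inl u \<and> alI al t = om v \<and> Inl y = mI m t (Inl v)))
     \<longleftrightarrow> ((u,v),(x,y)) \<in> shift_related E al om m"
    (is "(\<exists>t\<in>_. ?W t) \<longleftrightarrow> _")
proof
  assume "\<exists>t\<in>edgesI V E. ?W t"
  then obtain t where t: "t \<in> edgesI V E" "?W t" by blast
  show "((u,v),(x,y)) \<in> shift_related E al om m"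
  proof (cases t)
    case (Inl e)
    with t have "e \<in> E"
      by (auto simp: edgesI_def)
    with Inl t uvxy have "edge_shift E al om m u v x y \<or> edge_shift E al om m x y u v"
      unfolding edge_shift_def Dom_def by auto
    then show ?thesis by auto
  next
    case (Inr p)
    with t show ?thesis by auto
  qed
next
  assume "((u,v),(x,y)) \<in> shift_related E al om m"
  then consider "edge_shift E al om m u v x y" | "edge_shift E al om m x y u v" | "(u,v) = (x,y)"
    by auto
  then show "\<exists>t\<in>edgesI V E. ?W t"
  proof cases
    case 1
    then obtain e where "(u,e) \<in> Dom E al om" "m u e = x" "(e,y) \<in> Dom E al om" "m e y = v"
      by (auto simp: edge_shift_def)
    then show ?thesis by (intro bexI[of _ "Inl e"]) (auto simp: edgesI_def Dom_def)
  next
    case 2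
    then obtain e where "(x,e) \<in> Dom E al om" "m x e = u" "(e,v) \<in> Dom E al om" "m e v = y"
      by (auto simp: edge_shift_def)
    then show ?thesis by (intro bexI[of _ "Inl e"]) (auto simp: edgesI_def Dom_def)
  next
    case 3
    with uvxy assms(2) show ?thesis by (intro bexI[of _ "Inr (al u)"]) (auto simp: edgesI_def)
  qed
qed

lemma equidivisible_iff_shift_related:
  assumes "\<forall>e\<in>E. al e \<in> V"
  shows "equidivisible V E al om m \<longleftrightarrow> equal_products E al om m \<subseteq> shift_related E al om m"
  unfolding subset_iff split_paired_All
proof (intro iffI allI impI)
  fix u v x y
  assume eq: "equidivisible V E al om m" and uvxy: "((u,v),(x,y)) \<in> equal_products E al om m"
  have "u \<in> E" "v \<in> E" "x \<in> E" "y \<in> E" "al u = om v" "al x = om y" "m u v = m x y"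
    using uvxy by simp_all
  from eq[unfolded equidivisible_def, rule_format, OF this]
  show "((u,v),(x,y)) \<in> shift_related E al om m"
    unfolding unitization_witness_iff[OF uvxy assms] .
next
  assume "\<forall>u v x y. ((u,v),(x,y)) \<in> equal_products E al om m \<longrightarrow> ((u,v),(x,y)) \<in> shift_related E al om m"
  then show "equidivisible V E al om m"
    unfolding equidivisible_def
    by (intro ballI impI, subst unitization_witness_iff[OF _ assms]) auto
qed

lemma equidivisible_factorial_subsemigroupoid:
  assumes sub: "subsemigroupoid VT ET V E al om m" and fac: "factorial ET E al om m"
    and "semigroupoid V E al om m" and "equidivisible V E al om m"
  shows "equidivisible VT ET al om m"
proof -
  have ET: "ET \<subseteq> E" and alT: "\<forall>e\<in>ET. al e \<in> VT"
    using sub by (auto simp: subsemigroupoid_def)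
  have alS: "\<forall>e\<in>E. al e \<in> V"
    using assms(3) by (auto simp: semigroupoid_def)
  have "equal_products ET al om m \<subseteq> equal_products E al om m"
    using Dom_mono[OF ET] by (auto simp: equal_products_def)
  then have "equal_products ET al om m \<subseteq> equal_products ET al om m \<inter> shift_related E al om m"
    using assms(4) equidivisible_iff_shift_related[OF alS] by blast
  then show ?thesis
    using shift_related_factorial[OF fac] equidivisible_iff_shift_related[OF alT] by blast
qed

context
  fixes X V E al om m
  assumes cs: "compact_semigroupoid X V E al om m"
begin

lemma edges_subset_topspace: "E \<subseteq> topspace X"
  using cs by (auto simp: compact_semigroupoid_def)

lemma mult_in_edges: "p \<in> Dom E al om \<Longrightarrow> case_prod m p \<in> E"
  using cs by (auto simp: compact_semigroupoid_def semigroupoid_def Dom_def)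

lemma openin_edges: "openin X E"
proof -
  have "topspace X - V = E"
    using cs by (auto simp: compact_semigroupoid_def semigroupoid_def)
  then show ?thesis
    using cs by (metis compact_semigroupoid_def closedin_def)
qed

lemma closedin_Dom: "closedin (prod_topology X X) (Dom E al om)"
proof -
  let ?EE = "subtopology (prod_topology X X) (E \<times> E)"
  have "continuous_map (subtopology X E) X al" "continuous_map (subtopology X E) X om"
    using cs by (auto simp: compact_semigroupoid_def continuous_map_in_subtopology)
  then have "continuous_map ?EE X (al \<circ> fst)" "continuous_map ?EE X (om \<circ> snd)"
    unfolding subtopology_Times by (auto intro: continuous_map_compose continuous_map_fst continuous_map_snd)
  moreover have "Hausdorff_space X"
    using cs by (simp add: compact_semigroupoid_def)
  ultimately have "closedin ?EE {p \<in> topspace ?EE. (al \<circ> fst) p = (om \<circ> snd) p}"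
    using closedin_continuous_maps_eq by blast
  moreover have "{p \<in> topspace ?EE. (al \<circ> fst) p = (om \<circ> snd) p} = Dom E al om"
    using edges_subset_topspace by (auto simp: Dom_def)
  moreover have "closedin (prod_topology X X) (E \<times> E)"
    using cs by (simp add: closedin_prod_Times_iff compact_semigroupoid_def)
  ultimately show ?thesis
    using closedin_trans_full by metis
qed

lemma closedin_mult_graph: "closedin (prod_topology (prod_topology X X) X) (mult_graph E al om m)"
proof -
  let ?D = "subtopology (prod_topology X X) (Dom E al om)"
  have "continuous_map ?D X (case_prod m)"
    using cs by (auto simp: compact_semigroupoid_def continuous_map_in_subtopology)
  then have "closedin (prod_topology ?D X) ((\<lambda>p. (p, case_prod m p)) ` topspace ?D)"
    using cs by (intro continuous_map_imp_closed_graph) (auto simp: compact_semigroupoid_def)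
  moreover have "topspace ?D = Dom E al om"
    using edges_subset_topspace by (auto simp: Dom_def)
  moreover have "closedin (prod_topology (prod_topology X X) X) (Dom E al om \<times> topspace X)"
    by (simp add: closedin_prod_Times_iff closedin_Dom)
  ultimately show ?thesis
    unfolding mult_graph_def prod_topology_subtopology using closedin_trans_full by metis
qed

lemma closedin_edge_shift:
  "closedin (prod_topology (prod_topology X X) (prod_topology X X))
     {((u,v),(x,y)). edge_shift E al om m u v x y}"
proof -
  let ?X4 = "prod_topology (prod_topology X X) (prod_topology X X)"
  let ?X5 = "prod_topology X ?X4"
  let ?G = "mult_graph E al om m"
  \<comment> \<open>For z = (e,((u,v),(x,y))): left z = ((u,e),x) and right z = ((e,y),v).\<close>
  define left :: "'a \<times> ('a \<times> 'a) \<times> ('a \<times> 'a) \<Rightarrow> ('a \<times> 'a) \<times> 'a" where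
    "left z = (((fst \<circ> fst \<circ> snd) z, fst z), (fst \<circ> snd \<circ> snd) z)" for z
  define right :: "'a \<times> ('a \<times> 'a) \<times> ('a \<times> 'a) \<Rightarrow> ('a \<times> 'a) \<times> 'a" where
    "right z = ((fst z, (snd \<circ> snd \<circ> snd) z), (snd \<circ> fst \<circ> snd) z)" for z
  define Z where "Z = {z \<in> topspace ?X5. left z \<in> ?G} \<inter> {z \<in> topspace ?X5. right z \<in> ?G}"
  have cont_left: "continuous_map ?X5 (prod_topology (prod_topology X X) X) left"
    unfolding left_def
    by (intro continuous_map_pairedI continuous_map_compose[OF continuous_map_fst]
        continuous_map_compose[OF continuous_map_snd] continuous_map_fst continuous_map_snd)
  have cont_right: "continuous_map ?X5 (prod_topology (prod_topology X X) X) right"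
    unfolding right_def
    by (intro continuous_map_pairedI continuous_map_compose[OF continuous_map_fst]
        continuous_map_compose[OF continuous_map_snd] continuous_map_fst continuous_map_snd)
  have "closedin ?X5 Z"
    unfolding Z_def
    by (intro closedin_Int closedin_continuous_map_preimage[OF cont_left closedin_mult_graph]
        closedin_continuous_map_preimage[OF cont_right closedin_mult_graph])
  moreover have "closed_map ?X5 ?X4 snd"
    using cs by (intro closed_map_snd) (simp add: compact_semigroupoid_def)
  ultimately have "closedin ?X4 (snd ` Z)"
    unfolding closed_map_def by blast
  moreover have "snd ` Z = {((u,v),(x,y)). edge_shift E al om m u v x y}"
  proof (intro equalityI subsetI)
    fix w assume "w \<in> snd ` Z"
    then obtain e u v x y where "(e,((u,v),(x,y))) \<in> Z" and w: "w = ((u,v),(x,y))"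
      by (metis imageE prod.collapse)
    then have "(u,e) \<in> Dom E al om" "m u e = x" "(e,y) \<in> Dom E al om" "m e y = v"
      by (simp_all add: Z_def left_def right_def)
    then show "w \<in> {((u,v),(x,y)). edge_shift E al om m u v x y}"
      unfolding w edge_shift_def by blast
  next
    fix w assume "w \<in> {((u,v),(x,y)). edge_shift E al om m u v x y}"
    then obtain u v x y e where w: "w = ((u,v),(x,y))"
      and e: "(u,e) \<in> Dom E al om" "m u e = x" "(e,y) \<in> Dom E al om" "m e y = v"
      by (auto simp: edge_shift_def)
    then have "x \<in> E" "v \<in> E"
      using mult_in_edges[OF e(1)] mult_in_edges[OF e(3)] by auto
    with e edges_subset_topspace have "(e, w) \<in> Z"
      by (auto simp: Z_def left_def right_def w Dom_def)
    then show "w \<in> snd ` Z"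
      by (metis image_eqI snd_conv)
  qed
  ultimately show ?thesis
    by (simp only:)
qed

lemma closedin_shift_related:
  "closedin (prod_topology (prod_topology X X) (prod_topology X X))
     (topspace (prod_topology (prod_topology X X) (prod_topology X X)) \<inter> shift_related E al om m)"
proof -
  let ?X4 = "prod_topology (prod_topology X X) (prod_topology X X)"
  let ?W = "{((u,v),(x,y)). edge_shift E al om m u v x y}"
  have swapped: "closedin ?X4 {z \<in> topspace ?X4. (snd z, fst z) \<in> ?W}"
    by (intro closedin_continuous_map_preimage[OF _ closedin_edge_shift]
        continuous_map_pairedI continuous_map_fst continuous_map_snd)
  have "Hausdorff_space (prod_topology X X)"
    using cs by (simp add: compact_semigroupoid_def Hausdorff_space_prod_topology)
  then have diagonal: "closedin ?X4 ((\<lambda>p. (p,p)) ` topspace (prod_topology X X))"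
    by (simp only: Hausdorff_space_closedin_diagonal)
  have "?W \<subseteq> topspace ?X4"
    using closedin_edge_shift by (rule closedin_subset)
  then have "topspace ?X4 \<inter> shift_related E al om m
      = ?W \<union> {z \<in> topspace ?X4. (snd z, fst z) \<in> ?W} \<union> (\<lambda>p. (p,p)) ` topspace (prod_topology X X)"
    unfolding subset_iff by (auto simp: shift_related_def)
  then show ?thesis
    using closedin_edge_shift swapped diagonal by (simp add: closedin_Un)
qed

lemma openin_image_mult:
  assumes "open_multiplication X E al om m" and "openin (prod_topology X X) U"
  shows "openin X (case_prod m ` (U \<inter> Dom E al om))"
proof -
  have "openin (subtopology (prod_topology X X) (Dom E al om)) (U \<inter> Dom E al om)"
    using assms(2) by (rule openin_subtopology_Int)
  then have "openin (subtopology X E) (case_prod m ` (U \<inter> Dom E al om))"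
    using assms(1) by (simp add: open_multiplication_def open_map_def)
  then show ?thesis
    using openin_trans_full openin_edges by blast
qed

lemma equal_products_subset_closure:
  assumes open_mult: "open_multiplication X E al om m" and sub: "subsemigroupoid VT ET V E al om m"
    and fac: "factorial ET E al om m" and dense: "X closure_of (VT \<union> ET) = topspace X"
  shows "equal_products E al om m
    \<subseteq> prod_topology (prod_topology X X) (prod_topology X X) closure_of equal_products ET al om m"
proof
  let ?X4 = "prod_topology (prod_topology X X) (prod_topology X X)"
  fix z assume "z \<in> equal_products E al om m"
  then obtain p q where z: "z = (p,q)" and pq: "p \<in> Dom E al om" "q \<in> Dom E al om"
    "case_prod m p = case_prod m q"
    by (auto simp: equal_products_def)
  show "z \<in> ?X4 closure_of equal_products ET al om m"
    unfolding in_closure_of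
  proof (intro conjI allI impI)
    show "z \<in> topspace ?X4"
      using z pq edges_subset_topspace by (auto simp: Dom_def)
    fix N assume "z \<in> N \<and> openin ?X4 N"
    then obtain U W where UW: "openin (prod_topology X X) U" "openin (prod_topology X X) W"
      "p \<in> U" "q \<in> W" "U \<times> W \<subseteq> N"
      using z by (metis openin_prod_topology_alt)
    let ?A = "case_prod m ` (U \<inter> Dom E al om)" and ?B = "case_prod m ` (W \<inter> Dom E al om)"
    have "openin X (?A \<inter> ?B)"
      using openin_image_mult[OF open_mult] UW by (simp add: openin_Int)
    moreover have "case_prod m p \<in> ?A \<inter> ?B"
      using UW(3,4) pq by (metis IntI image_eqI)
    ultimately obtain w where w: "w \<in> VT \<union> ET" "w \<in> ?A" "w \<in> ?B"
      using dense unfolding dense_intersects_open by blast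
    from w(2) obtain p' where p': "p' \<in> U \<inter> Dom E al om" "case_prod m p' = w"
      by auto
    from w(3) obtain q' where q': "q' \<in> W \<inter> Dom E al om" "case_prod m q' = w"
      by auto
    have "w \<in> E"
      using mult_in_edges p' by (metis IntD2)
    with w(1) have "w \<in> ET"
      using cs sub by (auto simp: compact_semigroupoid_def semigroupoid_def subsemigroupoid_def)
    then have "(p',q') \<in> equal_products ET al om m"
      using p' q' Dom_factorial[OF fac] by (auto simp: equal_products_def)
    moreover have "(p',q') \<in> N"
      using p' q' UW by blast
    ultimately show "\<exists>z'. z' \<in> equal_products ET al om m \<and> z' \<in> N"
      by blast
  qed
qed

lemma equidivisible_from_dense_factorial_subsemigroupoid:
  assumes "open_multiplication X E al om m" and sub: "subsemigroupoid VT ET V E al om m"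
    and fac: "factorial ET E al om m" and "X closure_of (VT \<union> ET) = topspace X"
    and "equidivisible VT ET al om m"
  shows "equidivisible V E al om m"
proof -
  let ?X4 = "prod_topology (prod_topology X X) (prod_topology X X)"
  have ET: "ET \<subseteq> E" and alT: "\<forall>e\<in>ET. al e \<in> VT"
    using sub by (auto simp: subsemigroupoid_def)
  have alS: "\<forall>e\<in>E. al e \<in> V"
    using cs by (auto simp: compact_semigroupoid_def semigroupoid_def)
  have "equal_products ET al om m \<subseteq> shift_related E al om m"
    using assms(5) shift_related_mono[OF ET] equidivisible_iff_shift_related[OF alT] by blast
  moreover have "equal_products ET al om m \<subseteq> topspace ?X4"
    using ET edges_subset_topspace by (auto simp: equal_products_def Dom_def)
  ultimately have "?X4 closure_of equal_products ET al om m \<subseteq> topspace ?X4 \<inter> shift_related E al om m"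
    by (intro closure_of_minimal closedin_shift_related) auto
  then show ?thesis
    using equal_products_subset_closure[OF assms(1-4)] equidivisible_iff_shift_related[OF alS]
    by blast
qed

end

theorem mainTheorem11:
  fixes X :: "'a topology"
    and V E VT ET :: "'a set"
    and al om :: "'a \<Rightarrow> 'a"
    and m :: "'a \<Rightarrow> 'a \<Rightarrow> 'a"
  assumes "compact_semigroupoid X V E al om m"
    and "open_multiplication X E al om m"
    and "subsemigroupoid VT ET V E al om m"
    and "factorial ET E al om m"
    and "X closure_of (VT \<union> ET) = topspace X"
  shows "equidivisible V E al om m \<longleftrightarrow> equidivisible VT ET al om m"
proof
  have "semigroupoid V E al om m"
    using assms(1) by (simp add: compact_semigroupoid_def)
  then show "equidivisible V E al om m \<Longrightarrow> equidivisible VT ET al om m"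
    using equidivisible_factorial_subsemigroupoid[OF assms(3,4)] by blast
next
  show "equidivisible VT ET al om m \<Longrightarrow> equidivisible V E al om m"
    by (rule equidivisible_from_dense_factorial_subsemigroupoid[OF assms])
qed

end
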